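(* Assume (A). Let $H\in(1,1+\lambda)$ be the unique abscissa with $f(H)=\mu H$. Let $M>2\mu/\sigma^2$, and let $A,b>0$ satisfy $$A>\max\Big\{M+H,\ \tfrac{f(0)}{c}M+H,\ \tfrac{\sigma^2M^2}{\sigma^2M-2\mu},\ \tfrac{f(0)}{c}\cdot\tfrac{\sigma^2M^2}{\sigma^2M-2\mu}\Big\},$$ $$\tfrac1M\max\Big\{\ln\tfrac{A}{A-M},\ \ln\tfrac{A}{A-\frac{f(0)}{c}M}\Big\}<b<\tfrac1M\min\Big\{\ln\tfrac{A}{H},\ \ln\big(\tfrac{\sigma^2}{2\mu}M\big)\Big\}.$$ Define $\underline\psi(x)=1-e^{-x}$ and $\overline\psi(x)=\frac AM\big(1-e^{-M(x\wedge b)}\big)$ for $x\ge0$. Then $\underline\psi$ is a viscosity subsolution and $\overline\psi$ is a viscosity supersolution of the ODE (E) on $[0,\infty)$, and $\underline\psi\le\overline\psi$ on $[0,\infty)$.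
   Context: Constants $\mu\in\mathbb R$, $\sigma>0$, $c>0$, $a>0$, $\lambda>0$; standing assumption (A): $a>\max\{1,2\mu\}$ and $\mu>\max\{c,\sigma^2/2\}$. $f(z)=\mu z+\lambda\ln\big[\lambda(e^{\frac{a}{\lambda}(1-z)}-1)/(1-z)\big]$ for $z\ne1$, $f(1)=\mu+\lambda\ln a$. The ODE (E) is $\frac12\sigma^2v''(x)+f(v'(x))-cv(x)=0$ on $[0,\infty)$ with $v(0)=0$. A function $u$ that is upper (resp. lower) semicontinuous on $[0,\infty)$ is a viscosity subsolution (resp. supersolution) of (E) if $u(0)=0$ and for every $x\in(0,\infty)$ and every $\varphi\in C^2(\mathbb R)$ with $0=(u-\varphi)(x)=\max_{y\in(0,\infty)}(u-\varphi)(y)$ (resp. $\min$), one has $\frac12\sigma^2\varphi''(x)+f(\varphi'(x))-cu(x)\ge0$ (resp. $\le0$). A viscosity solution is a continuous function that is both. *)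

theory Defs
  imports "HOL-Analysis.Analysis"
begin

definition fE :: "real \<Rightarrow> real \<Rightarrow> real \<Rightarrow> real \<Rightarrow> real" where
  "fE mu lam a z =
     (if z = 1 then mu + lam * ln a
      else mu * z + lam * ln (lam * (exp (a / lam * (1 - z)) - 1) / (1 - z)))"

definition usc_on :: "real set \<Rightarrow> (real \<Rightarrow> real) \<Rightarrow> bool" where
  "usc_on S u \<longleftrightarrow> (\<forall>x\<in>S. \<forall>e>0. \<exists>d>0. \<forall>y\<in>S. \<bar>y - x\<bar> < d \<longrightarrow> u y < u x + e)"

definition lsc_on :: "real set \<Rightarrow> (real \<Rightarrow> real) \<Rightarrow> bool" where
  "lsc_on S u \<longleftrightarrow> (\<forall>x\<in>S. \<forall>e>0. \<exists>d>0. \<forall>y\<in>S. \<bar>y - x\<bar> < d \<longrightarrow> u y > u x - e)"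

definition C2_with :: "(real \<Rightarrow> real) \<Rightarrow> (real \<Rightarrow> real) \<Rightarrow> (real \<Rightarrow> real) \<Rightarrow> bool" where
  "C2_with phi phi' phi'' \<longleftrightarrow>
     (\<forall>x. (phi has_real_derivative phi' x) (at x)) \<and>
     (\<forall>x. (phi' has_real_derivative phi'' x) (at x)) \<and>
     continuous_on UNIV phi''"

definition visc_subsolution :: "real \<Rightarrow> real \<Rightarrow> (real \<Rightarrow> real) \<Rightarrow> (real \<Rightarrow> real) \<Rightarrow> bool" where
  "visc_subsolution sig c F u \<longleftrightarrow>
     usc_on {0..} u \<and> u 0 = 0 \<and>
     (\<forall>x>0. \<forall>phi phi' phi''. C2_with phi phi' phi'' \<and> u x - phi x = 0 \<and>
        (\<forall>y>0. u y - phi y \<le> u x - phi x) \<longrightarrow>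
        sig\<^sup>2 / 2 * phi'' x + F (phi' x) - c * u x \<ge> 0)"

definition visc_supersolution :: "real \<Rightarrow> real \<Rightarrow> (real \<Rightarrow> real) \<Rightarrow> (real \<Rightarrow> real) \<Rightarrow> bool" where
  "visc_supersolution sig c F u \<longleftrightarrow>
     lsc_on {0..} u \<and> u 0 = 0 \<and>
     (\<forall>x>0. \<forall>phi phi' phi''. C2_with phi phi' phi'' \<and> u x - phi x = 0 \<and>
        (\<forall>y>0. u y - phi y \<ge> u x - phi x) \<longrightarrow>
        sig\<^sup>2 / 2 * phi'' x + F (phi' x) - c * u x \<le> 0)"

end

theory Submission
  imports Defs
begin

text \<open>Write f z = mu z + lam ln (a E (a / lam (1 - z))) with E t = (exp t - 1) / t. The bound
  E t \<ge> exp (t / 2) for t > 0 gives f p > mu for p < 1, and monotonicity of E on the negative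
  axis gives f z \<le> mu z for z \<ge> H. The lower function is smooth, so a test function touching
  it from above at x has phi' x = exp (- x) < 1 and phi'' x \<ge> - exp (- x), and the first bound
  on f makes the operator nonnegative. The upper function is smooth below b with slope at least
  A exp (- M b) \<ge> H, where the second bound on f and sigma^2 M > 2 mu make the operator
  nonpositive; it is constant above b, where f 0 < c times its value suffices; and at b it has
  a concave corner, which no smooth function touches from below. The comparison holds because
  the difference of the two functions has nonnegative slope on [0, b] and the upper one
  exceeds 1 beyond b.\<close>

definition exp_diffquot :: "real \<Rightarrow> real" where
  "exp_diffquot t = (exp t - 1) / t"

lemma exp_diffquot_pos:
  assumes "t \<noteq> 0" shows "exp_diffquot t > 0"
  using assms by (cases "t > 0") (auto simp: exp_diffquot_def divide_pos_pos divide_neg_neg)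

lemma exp_half_le_exp_diffquot:
  assumes "t > 0" shows "exp (t / 2) \<le> exp_diffquot t"
proof -
  have "t \<le> exp (t / 2) - exp (- (t / 2))"
    using real_le_x_sinh[of "t / 2"] assms by (simp add: exp_minus)
  then have "t * exp (t / 2) \<le> (exp (t / 2) - exp (- (t / 2))) * exp (t / 2)"
    by (simp add: mult_right_mono)
  also have "\<dots> = exp t - 1"
    by (simp add: algebra_simps flip: exp_add)
  finally show ?thesis
    using assms by (simp add: exp_diffquot_def pos_le_divide_eq mult.commute)
qed

text \<open>Convexity of exp, applied on the chord from s to 0.\<close>
lemma exp_diffquot_mono_neg:
  assumes "s \<le> t" "t < 0" shows "exp_diffquot s \<le> exp_diffquot t"
proof -
  define \<theta> where "\<theta> = t / s"
  have \<theta>: "0 \<le> \<theta>" "\<theta> \<le> 1" using assms by (auto simp: \<theta>_def zero_le_divide_iff divide_le_eq_1)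
  have "exp ((1 - \<theta>) *\<^sub>R 0 + \<theta> *\<^sub>R s) \<le> (1 - \<theta>) * exp 0 + \<theta> * exp s"
    using convex_onD[OF exp_convex \<theta>, of 0 s] by simp
  moreover have "(1 - \<theta>) *\<^sub>R 0 + \<theta> *\<^sub>R s = t" using assms by (simp add: \<theta>_def)
  ultimately have "exp t - 1 \<le> \<theta> * (exp s - 1)" by (simp add: algebra_simps)
  then show ?thesis
    using assms by (simp add: exp_diffquot_def \<theta>_def field_simps)
qed

lemma fE_eq_exp_diffquot:
  assumes "lam > 0" "a > 0" "z \<noteq> 1"
  shows "fE mu lam a z = mu * z + lam * ln (a * exp_diffquot (a / lam * (1 - z)))"
proof -
  have "lam * (exp (a / lam * (1 - z)) - 1) / (1 - z) = a * exp_diffquot (a / lam * (1 - z))"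
    using assms by (simp add: exp_diffquot_def field_simps)
  then show ?thesis using assms by (simp add: fE_def)
qed

lemma fE_gt:
  assumes "lam > 0" "a > 1" "2 * mu \<le> a" "p < 1"
  shows "fE mu lam a p > mu"
proof -
  define t where "t = a / lam * (1 - p)"
  have t: "t > 0" using assms by (simp add: t_def)
  have "a * exp (t / 2) \<le> a * exp_diffquot t"
    using exp_half_le_exp_diffquot[OF t] assms by simp
  moreover have "ln (a * exp (t / 2)) = ln a + t / 2" using assms by (simp add: ln_mult)
  moreover have "0 < a * exp (t / 2)" using assms by simp
  ultimately have "ln a + t / 2 \<le> ln (a * exp_diffquot t)"
    by (metis ln_le_cancel_iff order_less_le_trans)
  moreover have "ln a > 0" using assms by simp
  ultimately have "lam * (t / 2) < lam * ln (a * exp_diffquot t)"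
    using assms by (intro mult_strict_left_mono) linarith+
  moreover have "lam * (t / 2) = a * (1 - p) / 2" using assms by (simp add: t_def)
  moreover have "mu \<le> mu * p + a * (1 - p) / 2"
    using mult_right_mono[of "2 * mu" a "1 - p"] assms by (simp add: field_simps)
  moreover have "fE mu lam a p = mu * p + lam * ln (a * exp_diffquot t)"
    using fE_eq_exp_diffquot[of lam a p mu] assms by (simp add: t_def)
  ultimately show ?thesis by linarith
qed

text \<open>For z > 1 the logarithmic term of fE decreases in z, and it vanishes at H.\<close>
lemma fE_le:
  assumes "lam > 0" "a > 0" "H > 1" "fE mu lam a H = mu * H" "H \<le> z"
  shows "fE mu lam a z \<le> mu * z"
proof -
  define q where "q = (\<lambda>w. a * exp_diffquot (a / lam * (1 - w)))"
  have q_pos: "q w > 0" if "w > 1" for w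
    using exp_diffquot_pos[of "a / lam * (1 - w)"] assms that by (simp add: q_def)
  have "lam * ln (q H) = 0"
    using assms fE_eq_exp_diffquot[of lam a H mu] by (simp add: q_def)
  then have "q H = 1" using assms q_pos[of H] by simp
  moreover have "q z \<le> q H"
  proof -
    have "a / lam * (1 - H) < 0" using assms by (intro mult_pos_neg) simp_all
    moreover have "a / lam * (1 - z) \<le> a / lam * (1 - H)" using assms by (intro mult_left_mono) simp_all
    ultimately show ?thesis
      unfolding q_def using assms by (simp add: exp_diffquot_mono_neg)
  qed
  ultimately have "ln (q z) \<le> 0" using q_pos[of z] assms by simp
  then show ?thesis
    using assms fE_eq_exp_diffquot[of lam a z mu] by (simp add: q_def mult_nonneg_nonpos)
qed

lemma continuous_on_imp_usc_on_lsc_on: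
  assumes "continuous_on S u"
  shows "usc_on S u" "lsc_on S u"
proof -
  have "\<exists>d>0. \<forall>y\<in>S. \<bar>y - x\<bar> < d \<longrightarrow> \<bar>u y - u x\<bar> < e" if "x \<in> S" "e > 0" for x e
    using assms that unfolding continuous_on_iff dist_real_def by blast
  then show "usc_on S u" "lsc_on S u"
    unfolding usc_on_def lsc_on_def by (fastforce simp: abs_less_iff)+
qed

lemma local_min_second_deriv_nonneg:
  fixes g g' g'' :: "real \<Rightarrow> real"
  assumes g': "\<And>y. (g has_real_derivative g' y) (at y)"
    and g'': "\<And>y. (g' has_real_derivative g'' y) (at y)"
    and "d > 0" and min: "\<And>y. \<bar>y - x\<bar> < d \<Longrightarrow> g x \<le> g y"
  shows "g' x = 0" "g'' x \<ge> 0"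
proof -
  show g'_zero: "g' x = 0"
    by (rule DERIV_local_min[OF g' \<open>d > 0\<close>]) (auto intro: min simp: abs_minus_commute)
  show "g'' x \<ge> 0"
  proof (rule ccontr)
    assume "\<not> g'' x \<ge> 0"
    then obtain e where e: "e > 0" "\<And>h. h > 0 \<Longrightarrow> h < e \<Longrightarrow> g' (x + h) < g' x"
      using DERIV_neg_dec_right[OF g'', of x] by auto
    define h where "h = min d e / 2"
    have h: "h > 0" "h < d" "h < e" using e \<open>d > 0\<close> by (auto simp: h_def)
    obtain z where z: "x < z" "z < x + h" "g (x + h) - g x = h * g' z"
      using MVT2[of x "x + h" g g'] h g' by auto
    have "g' z < 0" using e(2)[of "z - x"] z h g'_zero by auto
    then have "h * g' z < 0" using h(1) by (simp add: mult_pos_neg)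
    then have "g (x + h) < g x" using z(3) by simp
    moreover have "g x \<le> g (x + h)" using min[of "x + h"] h by auto
    ultimately show False by simp
  qed
qed

lemma touching_below_derivs:
  fixes g phi :: "real \<Rightarrow> real"
  assumes "\<And>y. (g has_real_derivative g' y) (at y)" "\<And>y. (g' has_real_derivative g'' y) (at y)"
    and "\<And>y. (phi has_real_derivative phi' y) (at y)" "\<And>y. (phi' has_real_derivative phi'' y) (at y)"
    and "d > 0" and "\<And>y. \<bar>y - x\<bar> < d \<Longrightarrow> g x - phi x \<le> g y - phi y"
  shows "phi' x = g' x" "phi'' x \<le> g'' x"
proof -
  have "((\<lambda>y. g y - phi y) has_real_derivative g' y - phi' y) (at y)"
    "((\<lambda>y. g' y - phi' y) has_real_derivative g'' y - phi'' y) (at y)" for y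
    using assms(1-4) by (auto intro: DERIV_diff)
  from local_min_second_deriv_nonneg[OF this assms(5,6)]
  show "phi' x = g' x" "phi'' x \<le> g'' x" by simp_all
qed

lemma touching_above_derivs:
  fixes g phi :: "real \<Rightarrow> real"
  assumes "\<And>y. (g has_real_derivative g' y) (at y)" "\<And>y. (g' has_real_derivative g'' y) (at y)"
    and "\<And>y. (phi has_real_derivative phi' y) (at y)" "\<And>y. (phi' has_real_derivative phi'' y) (at y)"
    and "d > 0" and "\<And>y. \<bar>y - x\<bar> < d \<Longrightarrow> g y - phi y \<le> g x - phi x"
  shows "phi' x = g' x" "phi'' x \<ge> g'' x"
proof -
  have "((\<lambda>y. - g y) has_real_derivative - g' y) (at y)"
    "((\<lambda>y. - g' y) has_real_derivative - g'' y) (at y)"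
    "((\<lambda>y. - phi y) has_real_derivative - phi' y) (at y)"
    "((\<lambda>y. - phi' y) has_real_derivative - phi'' y) (at y)" for y
    using assms(1-4) by (auto intro: DERIV_minus)
  from touching_below_derivs[OF this assms(5), of x] assms(6)
  show "phi' x = g' x" "phi'' x \<ge> g'' x" by (simp_all add: algebra_simps)
qed

text \<open>The right-hand condition forces phi'b \<le> 0, whereas touching g from below on the left
  needs phi'b \<ge> g'b > 0.\<close>
lemma no_touching_below_at_corner:
  assumes g: "(g has_real_derivative g'b) (at b)" "g'b > 0"
    and phi: "(phi has_real_derivative phi'b) (at b)" and "d > 0"
    and left: "\<And>y. b - d < y \<Longrightarrow> y \<le> b \<Longrightarrow> g b - phi b \<le> g y - phi y"
    and right: "\<And>y. b \<le> y \<Longrightarrow> y < b + d \<Longrightarrow> phi y \<le> phi b"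
  shows False
proof -
  have "phi'b \<le> 0"
  proof (rule ccontr)
    assume "\<not> phi'b \<le> 0"
    then obtain e where "e > 0" "\<And>h. h > 0 \<Longrightarrow> h < e \<Longrightarrow> phi b < phi (b + h)"
      using DERIV_pos_inc_right[OF phi] by auto
    moreover have "0 < min d e / 2" "min d e / 2 < d" "min d e / 2 < e" using \<open>d > 0\<close> \<open>e > 0\<close> by auto
    ultimately show False using right[of "b + min d e / 2"] by fastforce
  qed
  then obtain e where "e > 0" "\<And>h. h > 0 \<Longrightarrow> h < e \<Longrightarrow> g (b - h) - phi (b - h) < g b - phi b"
    using DERIV_pos_inc_left[OF DERIV_diff[OF g(1) phi]] g(2) by auto
  moreover have "0 < min d e / 2" "min d e / 2 < d" "min d e / 2 < e" using \<open>d > 0\<close> \<open>e > 0\<close> by auto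
  ultimately show False using left[of "b - min d e / 2"] by fastforce
qed

lemma visc_subsolution_one_minus_exp_neg:
  assumes "lam > 0" "a > 1" "2 * mu \<le> a" "c \<le> mu" "sig\<^sup>2 / 2 \<le> mu"
  shows "visc_subsolution sig c (fE mu lam a) (\<lambda>x. 1 - exp (- x))"
  unfolding visc_subsolution_def
proof (intro conjI allI impI)
  show "usc_on {0..} (\<lambda>x. 1 - exp (- x))"
    by (intro continuous_on_imp_usc_on_lsc_on continuous_intros)
  show "1 - exp (- 0) = (0::real)" by simp
  fix x :: real and phi phi' phi'' :: "real \<Rightarrow> real"
  assume x: "x > 0"
    and touch: "C2_with phi phi' phi'' \<and> 1 - exp (- x) - phi x = 0 \<and>
      (\<forall>y>0. 1 - exp (- y) - phi y \<le> 1 - exp (- x) - phi x)"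
  define p where "p = exp (- x)"
  have p: "0 < p" "p < 1" using x by (auto simp: p_def)
  have psi': "((\<lambda>y. 1 - exp (- y)) has_real_derivative exp (- y)) (at y)"
    and psi'': "((\<lambda>y. exp (- y)) has_real_derivative - exp (- y)) (at y)" for y :: real
    by (auto intro!: derivative_eq_intros)
  have max: "1 - exp (- y) - phi y \<le> 1 - exp (- x) - phi x" if "\<bar>y - x\<bar> < x" for y
  proof -
    have "y > 0" using that by auto
    then show ?thesis using touch by blast
  qed
  have phi: "\<And>y. (phi has_real_derivative phi' y) (at y)" "\<And>y. (phi' has_real_derivative phi'' y) (at y)"
    using touch by (auto simp: C2_with_def)
  have "phi' x = p" "phi'' x \<ge> - p"
    using touching_above_derivs[OF psi' psi'' phi x max] by (simp_all add: p_def)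
  moreover have "fE mu lam a p > mu" using fE_gt assms p by blast
  moreover have "sig\<^sup>2 / 2 * p \<le> mu * p" "c * (1 - p) \<le> mu * (1 - p)"
    using assms p by (auto intro: mult_right_mono)
  moreover have "sig\<^sup>2 / 2 * (- p) \<le> sig\<^sup>2 / 2 * phi'' x"
    using calculation(2) by (intro mult_left_mono) simp_all
  ultimately show "0 \<le> sig\<^sup>2 / 2 * phi'' x + fE mu lam a (phi' x) - c * (1 - exp (- x))"
    unfolding p_def[symmetric] by (simp add: algebra_simps)
qed

lemma visc_supersolution_truncated_exp:
  assumes "lam > 0" "a > 0" "M > 0" "b > 0" "c \<ge> 0" "2 * mu \<le> sig\<^sup>2 * M"
    and H: "H > 1" "fE mu lam a H = mu * H" "H \<le> A * exp (- M * b)"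
    and f0: "fE mu lam a 0 \<le> c * (A / M * (1 - exp (- M * b)))"
  shows "visc_supersolution sig c (fE mu lam a) (\<lambda>x. A / M * (1 - exp (- M * min x b)))"
  unfolding visc_supersolution_def
proof (intro conjI allI impI)
  show "lsc_on {0..} (\<lambda>x. A / M * (1 - exp (- M * min x b)))"
    by (intro continuous_on_imp_usc_on_lsc_on continuous_intros)
  show "A / M * (1 - exp (- M * min 0 b)) = 0" using \<open>b > 0\<close> by simp
  define g where "g = (\<lambda>x. A / M * (1 - exp (- M * x)))"
  define u where "u = (\<lambda>x. g (min x b))"
  have slope_b: "A * exp (- M * b) > 0" using H by linarith
  then have A: "A > 0" by (simp add: zero_less_mult_iff)
  have g': "(g has_real_derivative A * exp (- M * y)) (at y)"
    and g'': "((\<lambda>y. A * exp (- M * y)) has_real_derivative - M * (A * exp (- M * y))) (at y)" for y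
    unfolding g_def using \<open>M > 0\<close> by (auto intro!: derivative_eq_intros simp: field_simps)
  have const: "((\<lambda>_. g b) has_real_derivative 0) (at y)" "((\<lambda>_. 0) has_real_derivative 0) (at y)"
    for y :: real by simp_all
  have u_nonneg: "u y \<ge> 0" if "y \<ge> 0" for y
    using that assms A by (simp add: u_def g_def)
  fix x :: real and phi phi' phi'' :: "real \<Rightarrow> real"
  assume "x > 0" and touch: "C2_with phi phi' phi'' \<and> A / M * (1 - exp (- M * min x b)) - phi x = 0 \<and>
    (\<forall>y>0. A / M * (1 - exp (- M * min y b)) - phi y \<ge> A / M * (1 - exp (- M * min x b)) - phi x)"
  have phi: "\<And>y. (phi has_real_derivative phi' y) (at y)" "\<And>y. (phi' has_real_derivative phi'' y) (at y)"
    using touch by (auto simp: C2_with_def)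
  have min: "u x - phi x \<le> u y - phi y" if "y > 0" for y
    using touch that unfolding u_def g_def by blast
  consider "x < b" | "x = b" | "x > b" by linarith
  then show "sig\<^sup>2 / 2 * phi'' x + fE mu lam a (phi' x) - c * (A / M * (1 - exp (- M * min x b))) \<le> 0"
  proof cases
    case 1
    have "g x - phi x \<le> g y - phi y" if "\<bar>y - x\<bar> < min x (b - x)" for y
      using min[of y] that 1 by (auto simp: u_def abs_less_iff)
    from touching_below_derivs[OF g' g'' phi, of "min x (b - x)", OF _ this]
    have phi_x: "phi' x = A * exp (- M * x)" "phi'' x \<le> - M * (A * exp (- M * x))"
      using 1 \<open>x > 0\<close> by simp_all
    define q where "q = A * exp (- M * x)"
    have "A * exp (- M * b) \<le> q" using 1 A \<open>M > 0\<close> by (simp add: q_def)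
    then have "H \<le> q" using H(3) by linarith
    then have "fE mu lam a q \<le> mu * q" using fE_le assms by blast
    moreover have "sig\<^sup>2 / 2 * phi'' x \<le> - (sig\<^sup>2 / 2 * (M * q))"
      using mult_left_mono[OF phi_x(2), of "sig\<^sup>2 / 2"] by (simp add: q_def)
    moreover have "mu * q \<le> sig\<^sup>2 / 2 * (M * q)"
      using mult_right_mono[of "2 * mu" "sig\<^sup>2 * M" q] \<open>H \<le> q\<close> H(1) assms(6) by simp
    moreover have "c * u x \<ge> 0" using u_nonneg[of x] \<open>x > 0\<close> \<open>c \<ge> 0\<close> by simp
    ultimately show ?thesis unfolding phi_x(1) q_def[symmetric] u_def g_def by linarith
  next
    case 2
    have "g b - phi b \<le> g y - phi y" if "b - b < y" "y \<le> b" for y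
      using min[of y] that 2 by (simp add: u_def)
    moreover have "phi y \<le> phi b" if "b \<le> y" "y < b + b" for y
      using min[of y] that 2 \<open>b > 0\<close> by (simp add: u_def)
    ultimately show ?thesis
      using no_touching_below_at_corner[OF g' slope_b phi(1) \<open>b > 0\<close>] by blast
  next
    case 3
    have "g b - phi x \<le> g b - phi y" if "\<bar>y - x\<bar> < x - b" for y
      using min[of y] that 3 \<open>b > 0\<close> by (simp add: u_def)
    from touching_below_derivs[OF const phi, of "x - b", OF _ this]
    have "phi' x = 0" "phi'' x \<le> 0"
      using 3 by simp_all
    moreover have "sig\<^sup>2 / 2 * phi'' x \<le> 0"
      using \<open>phi'' x \<le> 0\<close> by (simp add: mult_nonneg_nonpos)
    ultimately show ?thesis using f0 3 by simp
  qed
qed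

lemma one_minus_exp_neg_le_truncated_exp:
  fixes A M b x :: real
  assumes "M > 0" "1 \<le> A * exp (- M * b)" "1 \<le> A / M * (1 - exp (- M * b))" "x \<ge> 0"
  shows "1 - exp (- x) \<le> A / M * (1 - exp (- M * min x b))"
proof (cases "x \<le> b")
  case True
  define k where "k = (\<lambda>y. A / M * (1 - exp (- M * y)) - (1 - exp (- y)))"
  have "k 0 \<le> k x"
  proof (rule DERIV_nonneg_imp_nondecreasing[of 0 x])
    show "0 \<le> x" using assms(4) .
  next
    fix y assume y: "0 \<le> y" "y \<le> x"
    have "(k has_real_derivative A * exp (- M * y) - exp (- y)) (at y)"
      unfolding k_def using \<open>M > 0\<close> by (auto intro!: derivative_eq_intros simp: field_simps)
    moreover have "A * exp (- M * b) \<le> A * exp (- M * y)"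
    proof -
      have "A * exp (- M * b) > 0" using assms(2) by linarith
      then have "A > 0" by (simp add: zero_less_mult_iff)
      then show ?thesis using y True \<open>M > 0\<close> by simp
    qed
    moreover have "exp (- y) \<le> 1" using y by simp
    ultimately show "\<exists>d. (k has_real_derivative d) (at y) \<and> d \<ge> 0"
      using assms(2) by (metis diff_ge_0_iff_ge order_trans)
  qed
  then show ?thesis using True by (simp add: k_def)
next
  case False
  then have "min x b = b" by simp
  show ?thesis unfolding \<open>min x b = b\<close> using assms(3) exp_gt_zero[of "- x"] by linarith
qed

lemma lt_mult_one_minus_exp_neg:
  fixes A K y :: real
  assumes "K < A" "ln (A / (A - K)) < y"
  shows "K < A * (1 - exp (- y))"
proof -
  have "A / (A - K) < exp y"
  proof (cases "A / (A - K) > 0")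
    case True
    then show ?thesis using assms(2) by (metis exp_less_cancel_iff exp_ln)
  next
    case False
    then show ?thesis by (meson exp_gt_zero le_less_trans not_less)
  qed
  then have "A * exp (- y) < A - K"
    using assms by (simp add: divide_less_eq exp_minus field_simps)
  then show ?thesis by (simp add: algebra_simps)
qed

theorem proposition3p4:
  fixes mu sigma c a lam H M A b :: real
  assumes sigma_pos: "sigma > 0" and c_pos: "c > 0" and a_pos: "a > 0" and lam_pos: "lam > 0"
    and A1: "a > max 1 (2 * mu)" and A2: "mu > max c (sigma\<^sup>2 / 2)"
    and H_int: "1 < H" "H < 1 + lam" and H_eq: "fE mu lam a H = mu * H"
    and H_unique: "\<forall>h. 1 < h \<and> h < 1 + lam \<and> fE mu lam a h = mu * h \<longrightarrow> h = H"
    and M_gt: "M > 2 * mu / sigma\<^sup>2"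
    and A_pos: "A > 0" and b_pos: "b > 0"
    and A_gt: "A > max (max (M + H) (fE mu lam a 0 / c * M + H))
                     (max (sigma\<^sup>2 * M\<^sup>2 / (sigma\<^sup>2 * M - 2 * mu))
                          (fE mu lam a 0 / c * (sigma\<^sup>2 * M\<^sup>2 / (sigma\<^sup>2 * M - 2 * mu))))"
    and b_gt: "1 / M * max (ln (A / (A - M))) (ln (A / (A - fE mu lam a 0 / c * M))) < b"
    and b_lt: "b < 1 / M * min (ln (A / H)) (ln (sigma\<^sup>2 / (2 * mu) * M))"
  shows "visc_subsolution sigma c (fE mu lam a) (\<lambda>x. 1 - exp (- x)) \<and>
         visc_supersolution sigma c (fE mu lam a) (\<lambda>x. A / M * (1 - exp (- M * min x b))) \<and>
         (\<forall>x\<ge>0. 1 - exp (- x) \<le> A / M * (1 - exp (- M * min x b)))"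
proof -
  have "2 * mu / sigma\<^sup>2 > 0" using A2 c_pos sigma_pos by simp
  then have M_pos: "M > 0" using M_gt by linarith
  have sigma_M: "2 * mu \<le> sigma\<^sup>2 * M"
    using M_gt sigma_pos by (simp add: divide_less_eq mult.commute)
  define f0 where "f0 = fE mu lam a 0 / c * M"
  have Mb: "ln (A / H) > M * b" "M * b > ln (A / (A - M))" "M * b > ln (A / (A - f0))"
    using b_lt b_gt M_pos by (auto simp: field_simps f0_def)
  have "exp (M * b) < A / H"
    using Mb(1) A_pos H_int by (metis divide_pos_pos exp_less_cancel_iff exp_ln less_trans zero_less_one)
  then have H_le: "H \<le> A * exp (- M * b)"
    using H_int by (simp add: exp_minus field_simps)
  have "M < A * (1 - exp (- (M * b)))" "f0 < A * (1 - exp (- (M * b)))"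
    using lt_mult_one_minus_exp_neg Mb(2,3) A_gt H_int unfolding f0_def by auto
  then have "1 \<le> A / M * (1 - exp (- M * b))" "fE mu lam a 0 \<le> c * (A / M * (1 - exp (- M * b)))"
    using M_pos c_pos by (simp_all add: f0_def field_simps)
  then show ?thesis
    using visc_subsolution_one_minus_exp_neg[of lam a mu c sigma]
      visc_supersolution_truncated_exp[of lam a M b c mu sigma H A]
      one_minus_exp_neg_le_truncated_exp[of M A b] H_le H_int H_eq A1 A2 lam_pos a_pos b_pos c_pos M_pos sigma_M
    by auto
qed

end
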